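(* Let $\mathcal{P}$ be a parallelohedron in $\mathbb{R}^n$ (centered at the origin). Then $\chi(\mathbb{R}^n,\Vert\cdot\Vert_{\mathcal{P}})\leq 2^n$.
   Context: A parallelohedron is a convex polytope that tiles $\mathbb{R}^n$ face-to-face by translations (such polytopes are centrally symmetric and tile by a lattice). $\Vert x\Vert_{\mathcal{P}}=\inf\{\lambda\geq0:x\in\lambda\mathcal{P}\}$. $\chi(\mathbb{R}^n,\Vert\cdot\Vert)$ denotes the chromatic number of the unit distance graph $G(\mathbb{R}^n,\Vert\cdot\Vert)$, whose vertices are the points of $\mathbb{R}^n$, with $x,y$ adjacent iff $\Vert x-y\Vert=1$. *)

theory Defs
  imports "HOL-Analysis.Analysis" "HOL-Library.Extended_Nat"
begin

definition parallelohedron :: "(real ^ 'n) set \<Rightarrow> bool" where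
  "parallelohedron P \<longleftrightarrow>
     polytope P \<and> interior P \<noteq> {} \<and>
     (\<exists>T :: (real ^ 'n) set.
        (\<Union>t\<in>T. (\<lambda>x. t + x) ` P) = UNIV \<and>
        (\<forall>t\<in>T. \<forall>s\<in>T. t \<noteq> s \<longrightarrow>
            interior ((\<lambda>x. t + x) ` P) \<inter> interior ((\<lambda>x. s + x) ` P) = {} \<and>
            ((\<lambda>x. t + x) ` P \<inter> (\<lambda>x. s + x) ` P) face_of ((\<lambda>x. t + x) ` P) \<and>
            ((\<lambda>x. t + x) ` P \<inter> (\<lambda>x. s + x) ` P) face_of ((\<lambda>x. s + x) ` P)))"

definition gauge_norm :: "(real ^ 'n) set \<Rightarrow> real ^ 'n \<Rightarrow> real" where
  "gauge_norm P x = Inf {l. l \<ge> 0 \<and> x \<in> (\<lambda>y. l *\<^sub>R y) ` P}"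

text \<open>Chromatic number of the unit distance graph of a (real-valued) distance function
  on the points of the type, as an extended natural (infinite if no finite colouring).\<close>
definition unit_dist_chromatic_number :: "('a::minus \<Rightarrow> real) \<Rightarrow> enat" where
  "unit_dist_chromatic_number N =
     Inf {enat k | k. \<exists>c :: 'a \<Rightarrow> nat. (\<forall>x. c x < k) \<and>
                        (\<forall>x y. N (x - y) = 1 \<longrightarrow> c x \<noteq> c y)}"

end

theory Submission
  imports Defs
begin

text \<open>
  Let T be the set of translation vectors of the tiling and \<Lambda> = {v. T + v \<subseteq> T} its group of
  periods. Across a point z in the relative interior of a facet F of P, the tile t + P is adjacent
  to t + w + P where w - F = F; as a bounded set has at most one centre of symmetry, w does not
  depend on t. So the union of the tiles t0 + \<Lambda> + P can only be left through ridges, which a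
  generic segment avoids, and hence T = t0 + \<Lambda>.

  Colour x by the class modulo 2\<Lambda> of a tile containing 2x, chosen consistently along a fixed
  generic direction. The half tiles (u + interior P) / 2 for pairwise incongruent u reduce modulo
  \<Lambda> to disjoint parts of P of volume 2^(-n) vol P each, so there are at most 2^n colours. If x
  and y get the same colour, then x - y lies in l + interior P for some l \<in> \<Lambda>, which does not
  meet the boundary of P, the unit sphere of the norm.
\<close>

lemma mem_translation_iff: "x \<in> (+) t ` S \<longleftrightarrow> x - t \<in> S"
  for x t :: "'a::ab_group_add"
  by (auto simp: image_iff intro!: bexI[of _ "x - t"])

lemma exists_notin_negligible:
  assumes "open S" "S \<noteq> {}" "negligible N"
  shows "\<exists>x\<in>S. x \<notin> N"
  using assms negligible_subset open_not_negligible by blast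

lemma generic_segment_avoids_ridges:
  fixes A B :: "'a::euclidean_space set"
  assumes H: "finite H" "\<And>a b. (a, b) \<in> H \<Longrightarrow> a \<noteq> 0"
    and A: "open A" "A \<noteq> {}" and B: "open B" "B \<noteq> {}"
  obtains x y where "x \<in> A" "y \<in> B"
    "\<And>z a b a' b'. z \<in> closed_segment x y \<Longrightarrow> (a, b) \<in> H \<Longrightarrow> (a', b') \<in> H \<Longrightarrow>
       a \<bullet> z = b \<Longrightarrow> a' \<bullet> z = b' \<Longrightarrow> \<exists>c. a' = c *\<^sub>R a"
proof -
  have "negligible (\<Union>(a, b)\<in>H. {y. a \<bullet> y = b})"
    using H by (auto intro!: negligible_Union negligible_hyperplane)
  then obtain x where x: "x \<in> A" "\<And>a b. (a, b) \<in> H \<Longrightarrow> a \<bullet> x \<noteq> b"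
    using exists_notin_negligible[OF A] by blast
  define nonparallel where
    "nonparallel = {((a, b), (a', b')) \<in> H \<times> H. \<not> (\<exists>c. a' = c *\<^sub>R a)}"
  \<comment> \<open>the hyperplane through x containing the intersection of the two given hyperplanes\<close>
  define normal where
    "normal = (\<lambda>((a, b), (a', b')). (b' - a' \<bullet> x) *\<^sub>R a - (b - a \<bullet> x) *\<^sub>R (a'::'a))"
  have normal_nonzero: "normal i \<noteq> 0" if "i \<in> nonparallel" for i
  proof
    assume "normal i = 0"
    obtain a b a' b' where i: "i = ((a, b), (a', b'))" by (metis prod.collapse)
    with that have "(a, b) \<in> H" "\<not> (\<exists>c. a' = c *\<^sub>R a)" by (auto simp: nonparallel_def)
    moreover have "(b - a \<bullet> x) *\<^sub>R a' = (b' - a' \<bullet> x) *\<^sub>R a"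
      using \<open>normal i = 0\<close> by (simp add: normal_def i)
    ultimately show False
      using x(2) by (metis (no_types) eq_vector_fraction_iff right_minus_eq)
  qed
  have "finite nonparallel" using H(1) by (auto simp: nonparallel_def intro: finite_subset)
  then have "negligible (\<Union>i\<in>nonparallel. {y. normal i \<bullet> y = normal i \<bullet> x})"
    using normal_nonzero by (auto intro!: negligible_Union negligible_hyperplane)
  then obtain y where y: "y \<in> B" "\<And>i. i \<in> nonparallel \<Longrightarrow> normal i \<bullet> y \<noteq> normal i \<bullet> x"
    using exists_notin_negligible[OF B] by blast
  show thesis
  proof (rule that[OF x(1) y(1)])
    fix z a b a' b'
    assume z: "z \<in> closed_segment x y" and ab: "(a, b) \<in> H" "(a', b') \<in> H"
      and on: "a \<bullet> z = b" "a' \<bullet> z = b'"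
    show "\<exists>c. a' = c *\<^sub>R a"
    proof (rule ccontr)
      assume "\<not> ?thesis"
      then have i: "((a, b), (a', b')) \<in> nonparallel" using ab by (simp add: nonparallel_def)
      obtain u where u: "z = x + u *\<^sub>R (y - x)"
        using z by (auto simp: in_segment algebra_simps)
      have "u \<noteq> 0" using u on x(2)[OF ab(1)] by auto
      have "normal ((a, b), (a', b')) \<bullet> (z - x) = 0"
        using on by (simp add: normal_def inner_diff_left inner_diff_right algebra_simps)
      then have "normal ((a, b), (a', b')) \<bullet> y = normal ((a, b), (a', b')) \<bullet> x"
        using \<open>u \<noteq> 0\<close> by (simp add: u inner_diff_right)
      with y(2)[OF i] show False by blast
    qed
  qed
qed

lemma polyhedron_halfspace_pairs:
  assumes "polyhedron P"
  obtains C where "finite C" "\<And>a b. (a, b) \<in> C \<Longrightarrow> a \<noteq> 0" "P = {y. \<forall>(a, b)\<in>C. a \<bullet> y \<le> b}"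
proof -
  obtain F where F: "finite F" "P = \<Inter>F" "\<forall>h\<in>F. \<exists>ab. fst ab \<noteq> 0 \<and> h = {x. fst ab \<bullet> x \<le> snd ab}"
    using assms unfolding polyhedron_def by auto
  then obtain ab where ab: "\<forall>h\<in>F. fst (ab h) \<noteq> 0 \<and> h = {x. fst (ab h) \<bullet> x \<le> snd (ab h)}"
    by metis
  show thesis
  proof (rule that[of "ab ` F"])
    show "finite (ab ` F)" using F(1) by simp
    show "a \<noteq> 0" if "(a, b) \<in> ab ` F" for a b using that ab by (metis fst_conv imageE)
    show "P = {y. \<forall>(a, b)\<in>ab ` F. a \<bullet> y \<le> b}"
      using F(2) ab by (auto simp: case_prod_unfold)
  qed
qed

lemma centre_of_symmetry_unique:
  fixes w w' :: "'a::real_normed_vector"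
  assumes "bounded F" "f0 \<in> F" "\<forall>f\<in>F. w - f \<in> F" "\<forall>f\<in>F. w' - f \<in> F"
  shows "w = w'"
proof (rule ccontr)
  assume "w \<noteq> w'"
  \<comment> \<open>the composite of the two point reflections is translation by w' - w\<close>
  have multiples: "f0 + of_nat k *\<^sub>R (w' - w) \<in> F" for k
  proof (induction k)
    case (Suc k)
    then have "w' - (w - (f0 + of_nat k *\<^sub>R (w' - w))) \<in> F" using assms(3,4) by blast
    then show ?case by (simp add: algebra_simps)
  qed (use assms(2) in simp)
  obtain R where R: "\<forall>f\<in>F. norm f \<le> R" using assms(1) bounded_pos by blast
  obtain k :: nat where k: "of_nat k > (R + norm f0) / norm (w' - w)" using reals_Archimedean2 by blast
  have "of_nat k * norm (w' - w) \<le> norm (f0 + of_nat k *\<^sub>R (w' - w)) + norm f0"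
    using norm_triangle_ineq4[of "f0 + of_nat k *\<^sub>R (w' - w)" f0] by simp
  also have "\<dots> \<le> R + norm f0" using R multiples by auto
  finally show False using k \<open>w \<noteq> w'\<close> by (simp add: divide_less_eq)
qed

lemma local_halfspace_imp_supporting:
  fixes P :: "'a::real_inner set"
  assumes "convex P" "z \<in> P" "r > 0" "\<forall>y\<in>ball z r. y \<in> P \<longleftrightarrow> a \<bullet> y \<le> a \<bullet> z" "p \<in> P"
  shows "a \<bullet> p \<le> a \<bullet> z"
proof (rule ccontr)
  assume "\<not> ?thesis"
  then have gt: "a \<bullet> p > a \<bullet> z" by simp
  define l where "l = min 1 (r / (norm (p - z) + 1))"
  have l: "0 < l" "l \<le> 1" using assms(3) by (auto simp: l_def add_nonneg_pos)
  have n: "norm (p - z) + 1 > 0" using norm_ge_zero[of "p - z"] by linarith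
  have "l * norm (p - z) \<le> r / (norm (p - z) + 1) * norm (p - z)"
    unfolding l_def by (intro mult_right_mono) auto
  also have "\<dots> < r / (norm (p - z) + 1) * (norm (p - z) + 1)"
    using assms(3) n by (intro mult_strict_left_mono) auto
  also have "\<dots> = r" using n by simp
  finally have "l * norm (p - z) < r" .
  define m where "m = (1 - l) *\<^sub>R z + l *\<^sub>R p"
  have "m \<in> P" using convexD[OF assms(1,2,5), of "1 - l" l] l by (simp add: m_def)
  moreover have "m \<in> ball z r"
    using \<open>l * norm (p - z) < r\<close> l
    by (simp add: m_def dist_norm algebra_simps norm_minus_commute flip: scaleR_diff_right)
  ultimately have "a \<bullet> m \<le> a \<bullet> z" using assms(4) by blast
  moreover have "a \<bullet> m = a \<bullet> z + l * (a \<bullet> p - a \<bullet> z)"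
    by (simp add: m_def inner_add_right inner_diff_right algebra_simps)
  ultimately show False using l gt mult_pos_pos[of l "a \<bullet> p - a \<bullet> z"] by linarith
qed

lemma local_halfspace_extends_beyond:
  assumes "r > 0" "\<forall>y\<in>ball z r. y \<in> P \<longleftrightarrow> a \<bullet> y \<le> a \<bullet> z" "a \<bullet> f = a \<bullet> z"
  shows "\<exists>d>0. z + d *\<^sub>R (z - f) \<in> P \<and> a \<bullet> (z + d *\<^sub>R (z - f)) = a \<bullet> z"
proof -
  have n: "norm (z - f) + 1 > 0" using norm_ge_zero[of "z - f"] by linarith
  define d where "d = r / 2 / (norm (z - f) + 1)"
  have d: "d > 0" using assms(1) n by (simp add: d_def)
  have "d * norm (z - f) < d * (norm (z - f) + 1)" using d by simp
  also have "\<dots> = r / 2" using n by (simp add: d_def field_simps)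
  finally have "d * norm (z - f) < r" using assms(1) by linarith
  then have "z + d *\<^sub>R (z - f) \<in> ball z r" using d by (simp add: dist_norm)
  moreover have "a \<bullet> (z + d *\<^sub>R (z - f)) = a \<bullet> z"
    using assms(3) by (simp add: inner_add_right inner_diff_right)
  ultimately show ?thesis using assms(2) d by auto
qed

section \<open>Face-to-face tilings by translates of a centrally symmetric polytope\<close>

locale face_to_face_tiling =
  fixes P :: "'a::euclidean_space set" and T :: "'a set" and C :: "('a \<times> real) set"
  assumes convex_P: "convex P" and compact_P: "compact P"
    and neg_mem_P: "\<And>x. x \<in> P \<Longrightarrow> - x \<in> P" and interior_P_nonempty: "interior P \<noteq> {}"
    and finite_C: "finite C" and C_nonzero: "\<And>a b. (a, b) \<in> C \<Longrightarrow> a \<noteq> 0"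
    and P_eq_halfspaces: "P = {y. \<forall>(a, b)\<in>C. a \<bullet> y \<le> b}"
    and tiles_cover: "\<And>x. \<exists>t\<in>T. x \<in> (+) t ` P"
    and tiles_interiors_disjoint: "\<And>t s. t \<in> T \<Longrightarrow> s \<in> T \<Longrightarrow> t \<noteq> s \<Longrightarrow>
      interior ((+) t ` P) \<inter> interior ((+) s ` P) = {}"
    and tiles_meet_in_face: "\<And>t s. t \<in> T \<Longrightarrow> s \<in> T \<Longrightarrow> t \<noteq> s \<Longrightarrow>
      ((+) t ` P \<inter> (+) s ` P) face_of ((+) t ` P)"
begin

lemma closed_P: "closed P"
  using compact_P compact_imp_closed by blast

lemma bounded_P: "bounded P"
  using compact_P compact_imp_bounded by blast

lemma closed_tile: "closed ((+) t ` P)"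
  using closed_P closed_translation by blast

lemma neg_mem_interior_P: "q \<in> interior P \<Longrightarrow> - q \<in> interior P"
proof -
  have "uminus ` P = P" using neg_mem_P by (auto simp: image_iff) (metis minus_minus neg_mem_P)
  then show "q \<in> interior P \<Longrightarrow> - q \<in> interior P" using interior_negations[of P] by auto
qed

lemma zero_in_interior_P: "0 \<in> interior P"
proof -
  obtain q where q: "q \<in> interior P" using interior_P_nonempty by auto
  from convexD[OF convex_interior[OF convex_P] q neg_mem_interior_P[OF q], of "1/2" "1/2"]
  show ?thesis by simp
qed

lemma closure_interior_P: "closure (interior P) = P"
  using convex_closure_interior[OF convex_P interior_P_nonempty] closed_P by simp

lemma tile_eq_if_meets_interior:
  assumes "t \<in> T" "s \<in> T" "x \<in> (+) t ` P" "x \<in> interior ((+) s ` P)"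
  shows "t = s"
proof (rule ccontr)
  assume "t \<noteq> s"
  have "x \<in> closure (interior ((+) t ` P))"
    using assms(3) closure_interior_P
    by (simp add: interior_translation closure_translation mem_translation_iff)
  then have "interior ((+) s ` P) \<inter> interior ((+) t ` P) \<noteq> {}"
    using assms(4) open_Int_closure_eq_empty[OF open_interior] by blast
  then show False using tiles_interiors_disjoint[OF assms(1,2) \<open>t \<noteq> s\<close>] by blast
qed

lemma translations_uniformly_separated:
  "\<exists>r>0. \<forall>t\<in>T. \<forall>s\<in>T. t \<noteq> s \<longrightarrow> r \<le> dist t s"
proof -
  obtain r where r: "r > 0" "ball 0 r \<subseteq> interior P"
    using zero_in_interior_P open_interior open_contains_ball by blast
  have "r \<le> dist t s" if "t \<in> T" "s \<in> T" "t \<noteq> s" for t s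
  proof (rule ccontr)
    assume "\<not> r \<le> dist t s"
    then have "s - t \<in> interior P" using r by (auto simp: dist_norm norm_minus_commute)
    then have "s \<in> interior ((+) t ` P)" by (simp add: interior_translation mem_translation_iff)
    moreover have "s \<in> (+) s ` P"
      using zero_in_interior_P interior_subset by (auto simp: mem_translation_iff)
    ultimately show False using tile_eq_if_meets_interior that by blast
  qed
  then show ?thesis using r by blast
qed

lemma finite_translations_in_compact:
  assumes "compact K"
  shows "finite (K \<inter> T)"
proof -
  obtain r where r: "r > 0" "\<forall>t\<in>T. \<forall>s\<in>T. t \<noteq> s \<longrightarrow> r \<le> dist t s"
    using translations_uniformly_separated by blast
  have "\<not> z islimpt T" for z
  proof
    assume "z islimpt T"
    then obtain y1 where y1: "y1 \<in> T" "y1 \<noteq> z" "dist y1 z < r/2"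
      using r(1) by (meson half_gt_zero islimpt_approachable)
    then have "dist y1 z > 0" by simp
    then obtain y2 where y2: "y2 \<in> T" "y2 \<noteq> z" "dist y2 z < min (r/2) (dist y1 z)"
      using r(1) \<open>z islimpt T\<close> by (meson half_gt_zero islimpt_approachable min_less_iff_conj)
    then have "y1 \<noteq> y2" by auto
    then have "r \<le> dist y1 y2" using r y1 y2 by blast
    moreover have "dist y1 y2 \<le> dist y1 z + dist y2 z" by (metis dist_commute dist_triangle)
    ultimately show False using y1 y2 by linarith
  qed
  then show ?thesis using finite_not_islimpt_in_compact[OF assms] by blast
qed

lemma finite_tiles_meeting_bounded:
  assumes "bounded B"
  shows "finite {t\<in>T. (+) t ` P \<inter> B \<noteq> {}}"
proof -
  obtain R1 where R1: "\<forall>x\<in>B. norm x \<le> R1" using assms bounded_pos by blast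
  obtain R2 where R2: "\<forall>x\<in>P. norm x \<le> R2" using bounded_P bounded_pos by blast
  have "{t\<in>T. (+) t ` P \<inter> B \<noteq> {}} \<subseteq> cball 0 (R1 + R2) \<inter> T"
  proof
    fix t assume "t \<in> {t\<in>T. (+) t ` P \<inter> B \<noteq> {}}"
    then obtain x where "t \<in> T" "x \<in> (+) t ` P" "x \<in> B" by blast
    then have "norm (x - t) \<le> R2" "norm x \<le> R1" using R1 R2 by (auto simp: mem_translation_iff)
    moreover have "norm t \<le> norm x + norm (x - t)" using norm_triangle_ineq4[of x "x - t"] by simp
    ultimately show "t \<in> cball 0 (R1 + R2) \<inter> T" using \<open>t \<in> T\<close> by simp
  qed
  then show ?thesis
    by (rule finite_subset) (simp add: finite_translations_in_compact)
qed

lemma small_ball_meets_only_tiles_containing_centre: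
  "\<exists>\<rho>>0. \<forall>t\<in>T. (+) t ` P \<inter> ball x \<rho> \<noteq> {} \<longrightarrow> x \<in> (+) t ` P"
proof -
  define S where "S = {t\<in>T. (+) t ` P \<inter> ball x 1 \<noteq> {} \<and> x \<notin> (+) t ` P}"
  define U where "U = ball x 1 - (\<Union>t\<in>S. (+) t ` P)"
  have "finite S"
    using finite_tiles_meeting_bounded[of "ball x 1"] by (rule rev_finite_subset) (auto simp: S_def)
  then have "open U" unfolding U_def using closed_tile by (intro open_Diff closed_UN) auto
  moreover have "x \<in> U" by (auto simp: U_def S_def)
  ultimately obtain \<rho> where "\<rho> > 0" "ball x \<rho> \<subseteq> U" using open_contains_ball by blast
  have "x \<in> (+) t ` P" if t: "t \<in> T" and meets: "(+) t ` P \<inter> ball x \<rho> \<noteq> {}" for t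
  proof (rule ccontr)
    assume "x \<notin> (+) t ` P"
    obtain p where p: "p \<in> (+) t ` P" "p \<in> U" using meets \<open>ball x \<rho> \<subseteq> U\<close> by blast
    then have "t \<in> S" using t \<open>x \<notin> (+) t ` P\<close> by (auto simp: S_def U_def)
    then show False using p by (auto simp: U_def)
  qed
  then show ?thesis using \<open>\<rho> > 0\<close> by blast
qed

lemma closed_Union_tiles:
  assumes "S \<subseteq> T"
  shows "closed (\<Union>t\<in>S. (+) t ` P)"
  unfolding closed_def open_contains_ball
proof
  fix y assume y: "y \<in> - (\<Union>t\<in>S. (+) t ` P)"
  obtain \<rho> where \<rho>: "\<rho> > 0" "\<forall>t\<in>T. (+) t ` P \<inter> ball y \<rho> \<noteq> {} \<longrightarrow> y \<in> (+) t ` P"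
    using small_ball_meets_only_tiles_containing_centre by blast
  have "ball y \<rho> \<subseteq> - (\<Union>t\<in>S. (+) t ` P)"
  proof
    fix p assume "p \<in> ball y \<rho>"
    then show "p \<in> - (\<Union>t\<in>S. (+) t ` P)" using \<rho>(2) y assms by blast
  qed
  then show "\<exists>e>0. ball y e \<subseteq> - (\<Union>t\<in>S. (+) t ` P)" using \<rho>(1) by blast
qed

lemma strict_inequalities_imp_interior:
  assumes "\<forall>(a, b)\<in>C. a \<bullet> y < b"
  shows "y \<in> interior P"
proof -
  define U where "U = (\<Inter>(a, b)\<in>C. {y. a \<bullet> y < b})"
  have "open U" unfolding U_def using finite_C by (auto intro: open_halfspace_lt)
  moreover have "U \<subseteq> P" unfolding U_def using P_eq_halfspaces by auto
  moreover have "y \<in> U" unfolding U_def using assms by auto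
  ultimately show ?thesis using interior_maximal by blast
qed

lemma P_not_in_hyperplane:
  assumes "a \<noteq> 0"
  shows "\<exists>p\<in>P. a \<bullet> p \<noteq> k"
proof (rule ccontr)
  assume "\<not> ?thesis"
  then have "interior P \<subseteq> interior {x. a \<bullet> x = k}" by (intro interior_mono) auto
  then show False using interior_P_nonempty assms by simp
qed

definition ridge_free :: "'a \<Rightarrow> bool" where
  "ridge_free z \<longleftrightarrow> (\<forall>(a, b)\<in>C. \<forall>(a', b')\<in>C. a \<bullet> z = b \<longrightarrow> a' \<bullet> z = b' \<longrightarrow> (\<exists>c. a' = c *\<^sub>R a))"

definition facet_point :: "'a \<Rightarrow> 'a \<Rightarrow> bool" where
  "facet_point a z \<longleftrightarrow> a \<noteq> 0 \<and> z \<in> P \<and> (\<exists>r>0. \<forall>y\<in>ball z r. y \<in> P \<longleftrightarrow> a \<bullet> y \<le> a \<bullet> z)"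

lemma active_parallel_constraints_same_direction:
  assumes "(a0, b0) \<in> C" "(a, b) \<in> C" "a0 \<bullet> z = b0" "a \<bullet> z = b" "a = c *\<^sub>R a0"
  shows "c > 0"
proof (rule ccontr)
  assume "\<not> c > 0"
  moreover have "c \<noteq> 0" using assms(5) C_nonzero[OF assms(2)] by auto
  ultimately have "c < 0" by simp
  \<comment> \<open>then both constraints together squeeze P into the hyperplane a0 \<bullet> y = b0\<close>
  have "a0 \<bullet> p = b0" if "p \<in> P" for p
  proof -
    have "a0 \<bullet> p \<le> b0" "c * (a0 \<bullet> p) \<le> c * b0"
      using \<open>p \<in> P\<close> assms unfolding P_eq_halfspaces by auto
    then show ?thesis using \<open>c < 0\<close> by (simp add: mult_le_cancel_left)
  qed
  then show False using P_not_in_hyperplane C_nonzero[OF assms(1)] by blast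
qed

lemma facet_point_if_ridge_free:
  assumes "z \<in> P" "z \<notin> interior P" "ridge_free z"
  shows "\<exists>a. facet_point a z"
proof -
  have below: "\<forall>(a, b)\<in>C. a \<bullet> z \<le> b" using assms(1) P_eq_halfspaces by blast
  obtain a0 b0 where ab0: "(a0, b0) \<in> C" "a0 \<bullet> z = b0"
  proof (rule ccontr)
    assume "\<not> thesis"
    then have "\<forall>(a, b)\<in>C. a \<bullet> z < b" using below that by fastforce
    then show False using strict_inequalities_imp_interior assms(2) by blast
  qed
  have active: "a \<bullet> y \<le> b \<longleftrightarrow> a0 \<bullet> y \<le> a0 \<bullet> z" if ab: "(a, b) \<in> C" "a \<bullet> z = b" for a b y
  proof -
    have "\<exists>c. a = c *\<^sub>R a0"
      using assms(3) ab0 ab unfolding ridge_free_def by (auto simp only: case_prod_conv ball_simps)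
    then obtain c where c: "a = c *\<^sub>R a0" by blast
    with active_parallel_constraints_same_direction[OF ab0(1) ab(1) ab0(2) ab(2)] have "c > 0" .
    then show ?thesis using c ab(2) by (auto simp: mult_le_cancel_left)
  qed
  define U where "U = (\<Inter>(a, b)\<in>{(a, b) \<in> C. a \<bullet> z < b}. {y. a \<bullet> y < b})"
  have "finite {(a, b) \<in> C. a \<bullet> z < b}" using finite_C by (rule rev_finite_subset) auto
  then have "open U" unfolding U_def by (auto intro!: open_INT open_halfspace_lt)
  moreover have "z \<in> U" unfolding U_def by auto
  ultimately obtain r where "r > 0" "ball z r \<subseteq> U" using open_contains_ball by blast
  have "y \<in> P \<longleftrightarrow> a0 \<bullet> y \<le> a0 \<bullet> z" if "y \<in> ball z r" for y
  proof -
    have "a \<bullet> y \<le> b \<longleftrightarrow> a0 \<bullet> y \<le> a0 \<bullet> z" if "(a, b) \<in> C" "a \<bullet> z = b" for a b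
      using active that by blast
    moreover have "a \<bullet> y < b" if "(a, b) \<in> C" "a \<bullet> z \<noteq> b" for a b
    proof -
      have "a \<bullet> z < b" using that below by fastforce
      then show ?thesis using that \<open>y \<in> ball z r\<close> \<open>ball z r \<subseteq> U\<close> by (auto simp: U_def)
    qed
    ultimately have "(\<forall>(a, b)\<in>C. a \<bullet> y \<le> b) \<longleftrightarrow> a0 \<bullet> y \<le> a0 \<bullet> z"
      using ab0 by (fastforce simp: less_imp_le)
    then show ?thesis using P_eq_halfspaces by blast
  qed
  then show ?thesis using C_nonzero[OF ab0(1)] \<open>r > 0\<close> assms(1) unfolding facet_point_def by blast
qed

lemma facet_point_supporting:
  assumes "facet_point a z" "p \<in> P"
  shows "a \<bullet> p \<le> a \<bullet> z"
  using assms local_halfspace_imp_supporting[OF convex_P] unfolding facet_point_def by blast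

lemma facet_point_lower_half_ball:
  assumes "facet_point a z"
  obtains r where "r > 0" "ball (t + z) r \<inter> {y. a \<bullet> (y - t) < a \<bullet> z} \<subseteq> interior ((+) t ` P)"
proof -
  obtain r where r: "r > 0" "\<forall>y\<in>ball z r. y \<in> P \<longleftrightarrow> a \<bullet> y \<le> a \<bullet> z"
    using assms unfolding facet_point_def by blast
  have "{y. a \<bullet> (y - t) < a \<bullet> z} = {y. a \<bullet> y < a \<bullet> z + a \<bullet> t}"
    by (auto simp: inner_diff_right)
  then have "open (ball (t + z) r \<inter> {y. a \<bullet> (y - t) < a \<bullet> z})"
    by (simp add: open_Int open_halfspace_lt)
  moreover have "ball (t + z) r \<inter> {y. a \<bullet> (y - t) < a \<bullet> z} \<subseteq> (+) t ` P"
  proof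
    fix y assume "y \<in> ball (t + z) r \<inter> {y. a \<bullet> (y - t) < a \<bullet> z}"
    then have "y - t \<in> ball z r" "a \<bullet> (y - t) \<le> a \<bullet> z" by (auto simp: dist_norm algebra_simps)
    then show "y \<in> (+) t ` P" using r(2) by (simp add: mem_translation_iff)
  qed
  ultimately show thesis using that r(1) interior_maximal by blast
qed

lemma neighbour_tile_beyond_facet:
  assumes "facet_point a z" "t \<in> T" "s \<in> T" "s \<noteq> t" "t + z \<in> (+) s ` P" "q \<in> (+) s ` P"
  shows "a \<bullet> z \<le> a \<bullet> (q - t)"
proof (rule ccontr)
  assume q_below: "\<not> ?thesis"
  obtain r where r: "r > 0" "ball (t + z) r \<inter> {y. a \<bullet> (y - t) < a \<bullet> z} \<subseteq> interior ((+) t ` P)"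
    using facet_point_lower_half_ball[OF assms(1)] by blast
  define below where "below = {y. a \<bullet> (y - t) < a \<bullet> z}"
  have "below = {y. a \<bullet> y < a \<bullet> z + a \<bullet> t}" by (auto simp: below_def inner_diff_right)
  then have "open below" by (simp add: open_halfspace_lt)
  have "q \<in> closure (interior ((+) s ` P))"
    using assms(6) closure_interior_P by (simp add: interior_translation closure_translation mem_translation_iff)
  moreover have "q \<in> below" using q_below by (simp add: below_def)
  ultimately have "below \<inter> interior ((+) s ` P) \<noteq> {}"
    using open_Int_closure_eq_empty[OF \<open>open below\<close>] by blast
  then obtain q' where q': "q' \<in> interior ((+) s ` P)" "q' \<in> below" by blast
  then have "q' \<noteq> t + z" by (auto simp: below_def)
  then have "ball (t + z) r \<inter> closure (open_segment q' (t + z)) \<noteq> {}"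
    using r(1) by (metis centre_in_ball closure_open_segment disjoint_iff ends_in_segment(2))
  then obtain m where m: "m \<in> open_segment q' (t + z)" "m \<in> ball (t + z) r"
    using open_Int_closure_eq_empty[OF open_ball] by blast
  have "m \<in> interior ((+) s ` P)"
    using in_interior_closure_convex_segment[OF convex_translation[OF convex_P] q'(1)] assms(5)
      closure_subset m(1) by blast
  moreover have "m \<in> below"
  proof -
    obtain u where u: "0 < u" "u < 1" "m = (1 - u) *\<^sub>R q' + u *\<^sub>R (t + z)"
      using m(1) by (auto simp: in_segment)
    have "a \<bullet> (m - t) = (1 - u) * (a \<bullet> (q' - t)) + u * (a \<bullet> z)"
      by (simp add: u inner_add_right inner_diff_right algebra_simps)
    also have "\<dots> < (1 - u) * (a \<bullet> z) + u * (a \<bullet> z)"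
      using q'(2) u by (simp add: below_def)
    finally show ?thesis by (simp add: below_def algebra_simps)
  qed
  ultimately show False
    using m(2) r(2) tiles_interiors_disjoint[OF assms(2,3)] assms(4) by (auto simp: below_def)
qed

lemma neighbour_tile_contains_facet_section:
  assumes "facet_point a z" "t \<in> T" "s \<in> T" "s \<noteq> t" "t + z \<in> (+) s ` P"
    and "f \<in> P" "a \<bullet> f = a \<bullet> z"
  shows "t + f \<in> (+) s ` P"
proof (cases "f = z")
  case False
  obtain r where r: "r > 0" "\<forall>y\<in>ball z r. y \<in> P \<longleftrightarrow> a \<bullet> y \<le> a \<bullet> z"
    using assms(1) unfolding facet_point_def by blast
  obtain d where d: "d > 0" "z + d *\<^sub>R (z - f) \<in> P"
    using local_halfspace_extends_beyond[OF r assms(7)] by blast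
  define f' where "f' = z + d *\<^sub>R (z - f)"
  have "t + z = (1 / (1 + d)) *\<^sub>R ((1 + d) *\<^sub>R (t + z))" using d(1) by simp
  also have "(1 + d) *\<^sub>R (t + z) = d *\<^sub>R (t + f) + (t + f')"
    by (simp add: f'_def algebra_simps)
  also have "(1 / (1 + d)) *\<^sub>R (d *\<^sub>R (t + f) + (t + f')) =
      (1 - 1 / (1 + d)) *\<^sub>R (t + f) + (1 / (1 + d)) *\<^sub>R (t + f')"
    using d(1) by (simp add: scaleR_add_right field_simps)
  finally have "t + z = (1 - 1 / (1 + d)) *\<^sub>R (t + f) + (1 / (1 + d)) *\<^sub>R (t + f')" .
  moreover have "t + f \<noteq> t + f'"
  proof
    assume "t + f = t + f'"
    then have "(1 + d) *\<^sub>R (z - f) = 0" by (simp add: f'_def algebra_simps)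
    then show False using d(1) False by simp
  qed
  ultimately have "t + z \<in> open_segment (t + f) (t + f')"
    using d(1) unfolding in_segment by (intro conjI exI[of _ "1 / (1 + d)"]) auto
  moreover have "t + f \<in> (+) t ` P" "t + f' \<in> (+) t ` P" "t + z \<in> (+) t ` P"
    using assms(1,6) d(2) by (auto simp: f'_def mem_translation_iff facet_point_def)
  ultimately show ?thesis
    using face_ofD[OF tiles_meet_in_face[OF assms(2,3) assms(4)[symmetric]]] assms(5) by blast
qed (use assms(5) in simp)

lemma neighbour_offset_reflects_facet:
  assumes "facet_point a z" "t \<in> T" "s \<in> T" "s \<noteq> t" "t + z \<in> (+) s ` P"
    and "f \<in> P" "a \<bullet> f = a \<bullet> z"
  shows "(s - t) - f \<in> P \<and> a \<bullet> ((s - t) - f) = a \<bullet> z"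
proof -
  have "z \<in> P" using assms(1) by (simp add: facet_point_def)
  then have "s + - z \<in> (+) s ` P" using neg_mem_P by (simp add: mem_translation_iff)
  from neighbour_tile_beyond_facet[OF assms(1-5) this]
  have lower: "2 * (a \<bullet> z) \<le> a \<bullet> (s - t)" by (simp add: inner_diff_right inner_add_right)
  have "t + z - s \<in> P" using assms(5) by (simp add: mem_translation_iff)
  then have "- (t + z - s) \<in> P" by (rule neg_mem_P)
  from facet_point_supporting[OF assms(1) this]
  have upper: "a \<bullet> (s - t) \<le> 2 * (a \<bullet> z)" by (simp add: inner_diff_right inner_add_right)
  have "t + f - s \<in> P"
    using neighbour_tile_contains_facet_section[OF assms] by (simp add: mem_translation_iff)
  then have "- (t + f - s) \<in> P" by (rule neg_mem_P)
  moreover have "- (t + f - s) = (s - t) - f" by (simp add: algebra_simps)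
  ultimately have "(s - t) - f \<in> P" by metis
  then show ?thesis using lower upper assms(7) by (simp add: inner_diff_right)
qed

lemma exists_neighbour_tile:
  assumes "facet_point a z" "t \<in> T"
  shows "\<exists>s\<in>T. s \<noteq> t \<and> t + z \<in> (+) s ` P"
proof -
  obtain \<rho> where \<rho>: "\<rho> > 0" "\<forall>s\<in>T. (+) s ` P \<inter> ball (t + z) \<rho> \<noteq> {} \<longrightarrow> t + z \<in> (+) s ` P"
    using small_ball_meets_only_tiles_containing_centre by blast
  have "a \<noteq> 0" using assms(1) by (simp add: facet_point_def)
  define y where "y = t + z + (\<rho> / 2 / norm a) *\<^sub>R a"
  have "y \<in> ball (t + z) \<rho>" using \<open>a \<noteq> 0\<close> \<rho>(1) by (simp add: y_def dist_norm)
  have "a \<bullet> (y - t) = a \<bullet> z + \<rho> / 2 / norm a * (a \<bullet> a)" by (simp add: y_def inner_add_right)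
  moreover have "\<rho> / 2 / norm a * (a \<bullet> a) > 0" using \<open>a \<noteq> 0\<close> \<rho>(1) by simp
  ultimately have "y - t \<notin> P" using facet_point_supporting[OF assms(1)] by force
  obtain s where s: "s \<in> T" "y \<in> (+) s ` P" using tiles_cover by blast
  then have "s \<noteq> t" using \<open>y - t \<notin> P\<close> by (auto simp: mem_translation_iff)
  moreover have "t + z \<in> (+) s ` P" using \<rho>(2) s \<open>y \<in> ball (t + z) \<rho>\<close> by blast
  ultimately show ?thesis using s(1) by blast
qed

section \<open>The translation vectors form a coset of the period lattice\<close>

definition periods :: "'a set" where
  "periods = {v. \<forall>t\<in>T. t + v \<in> T}"

lemma zero_in_periods: "0 \<in> periods"
  by (simp add: periods_def)

lemma periods_add: "u \<in> periods \<Longrightarrow> v \<in> periods \<Longrightarrow> u + v \<in> periods"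
  by (simp add: periods_def add.assoc[symmetric])

lemma periods_uminus:
  assumes "v \<in> periods"
  shows "- v \<in> periods"
proof -
  have "t - v \<in> T" if "t \<in> T" for t
  proof -
    obtain s where s: "s \<in> T" "t - v \<in> (+) s ` P" using tiles_cover by blast
    have "s + v \<in> T" using assms s(1) by (simp add: periods_def)
    moreover have "t \<in> (+) (s + v) ` P"
      using s(2) unfolding mem_translation_iff by (simp add: diff_diff_eq add.commute)
    moreover have "t \<in> interior ((+) t ` P)"
      using zero_in_interior_P by (simp add: interior_translation mem_translation_iff)
    ultimately have "s + v = t" using tile_eq_if_meets_interior that by blast
    then show ?thesis using s(1) by (metis add_diff_cancel)
  qed
  then show ?thesis by (simp add: periods_def)
qed

lemma periods_diff: "u \<in> periods \<Longrightarrow> v \<in> periods \<Longrightarrow> u - v \<in> periods"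
  using periods_add[OF _ periods_uminus] by (metis diff_conv_add_uminus)

lemma facet_neighbour_translation:
  assumes "facet_point a z"
  shows "\<exists>w\<in>periods. \<forall>t\<in>T. \<forall>s\<in>T. s \<noteq> t \<and> t + z \<in> (+) s ` P \<longrightarrow> s = t + w"
proof -
  define F where "F = {f \<in> P. a \<bullet> f = a \<bullet> z}"
  have "bounded F" unfolding F_def by (rule bounded_subset[OF bounded_P]) auto
  have "z \<in> F" using assms by (simp add: F_def facet_point_def)
  have reflects: "\<forall>f\<in>F. (s - t) - f \<in> F" if "t \<in> T" "s \<in> T" "s \<noteq> t" "t + z \<in> (+) s ` P" for t s
    using neighbour_offset_reflects_facet[OF assms that] by (simp add: F_def)
  obtain t0 where "t0 \<in> T" using tiles_cover by blast
  then obtain s0 where s0: "s0 \<in> T" "s0 \<noteq> t0" "t0 + z \<in> (+) s0 ` P"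
    using exists_neighbour_tile[OF assms] by blast
  define w where "w = s0 - t0"
  \<comment> \<open>each neighbour offset is a centre of symmetry of the facet F, hence all of them equal w\<close>
  have neighbour: "s = t + w" if "t \<in> T" "s \<in> T" "s \<noteq> t" "t + z \<in> (+) s ` P" for t s
    using centre_of_symmetry_unique[OF \<open>bounded F\<close> \<open>z \<in> F\<close> reflects[OF that] reflects[OF \<open>t0 \<in> T\<close> s0]]
    by (simp add: w_def algebra_simps)
  have "t + w \<in> T" if t: "t \<in> T" for t
  proof -
    obtain s where "s \<in> T" "s \<noteq> t" "t + z \<in> (+) s ` P"
      using exists_neighbour_tile[OF assms t] by blast
    then show ?thesis using neighbour[OF t] by simp
  qed
  then have "w \<in> periods" by (simp add: periods_def)
  with neighbour show ?thesis by blast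
qed

lemma interior_Union_period_tiles_at_facet:
  assumes "t0 \<in> T" "v \<in> periods" "facet_point a (z - (t0 + v))"
  shows "z \<in> interior (\<Union>u\<in>periods. (+) (t0 + u) ` P)"
proof -
  define U where "U = (\<Union>u\<in>periods. (+) (t0 + u) ` P)"
  obtain w where w: "w \<in> periods" "\<forall>t\<in>T. \<forall>s\<in>T. s \<noteq> t \<and> t + (z - (t0 + v)) \<in> (+) s ` P \<longrightarrow> s = t + w"
    using facet_neighbour_translation[OF assms(3)] by blast
  obtain \<rho> where \<rho>: "\<rho> > 0" "\<forall>s\<in>T. (+) s ` P \<inter> ball z \<rho> \<noteq> {} \<longrightarrow> z \<in> (+) s ` P"
    using small_ball_meets_only_tiles_containing_centre by blast
  have "t0 + v \<in> T" using assms(1,2) by (simp add: periods_def)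
  have "ball z \<rho> \<subseteq> U"
  proof
    fix p assume "p \<in> ball z \<rho>"
    obtain s where s: "s \<in> T" "p \<in> (+) s ` P" using tiles_cover by blast
    then have "z \<in> (+) s ` P" using \<rho>(2) \<open>p \<in> ball z \<rho>\<close> by blast
    moreover have "(t0 + v) + (z - (t0 + v)) = z" by simp
    ultimately have "s = t0 + v \<or> s = t0 + (v + w)"
      using w(2) \<open>t0 + v \<in> T\<close> s(1) by (metis add.assoc)
    moreover have "v + w \<in> periods" using periods_add[OF assms(2) w(1)] .
    ultimately show "p \<in> U" using s(2) assms(2) unfolding U_def by blast
  qed
  then have "z \<in> interior U"
    using \<rho>(1) by (meson centre_in_ball interior_maximal open_ball subsetD)
  then show ?thesis by (simp add: U_def)
qed

lemma exists_segment_off_ridges: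
  assumes A: "open A" "A \<noteq> {}" "bounded A" and B: "open B" "B \<noteq> {}" "bounded B"
  obtains x y where "x \<in> A" "y \<in> B"
    "\<And>z t. z \<in> closed_segment x y \<Longrightarrow> t \<in> T \<Longrightarrow> z \<in> (+) t ` P \<Longrightarrow> ridge_free (z - t)"
proof -
  have "bounded (A \<union> B)" using A(3) B(3) by simp
  then obtain c e where "A \<union> B \<subseteq> cball c e" by (auto simp: bounded_subset_cball)
  define K where "K = cball c e"
  have K: "A \<union> B \<subseteq> K" "bounded K" "convex K"
    using \<open>A \<union> B \<subseteq> cball c e\<close> by (simp_all add: K_def)
  define S where "S = {t\<in>T. (+) t ` P \<inter> K \<noteq> {}}"
  have "finite S" unfolding S_def using K(2) by (rule finite_tiles_meeting_bounded)
  define H where "H = (\<lambda>(t, (a, b)). (a, b + a \<bullet> t)) ` (S \<times> C)"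
  have "finite H" unfolding H_def using \<open>finite S\<close> finite_C by simp
  moreover have "a \<noteq> 0" if "(a, b) \<in> H" for a b using that C_nonzero by (auto simp: H_def)
  ultimately obtain x y where xy: "x \<in> A" "y \<in> B"
    and generic: "\<And>z a b a' b'. z \<in> closed_segment x y \<Longrightarrow> (a, b) \<in> H \<Longrightarrow> (a', b') \<in> H \<Longrightarrow>
       a \<bullet> z = b \<Longrightarrow> a' \<bullet> z = b' \<Longrightarrow> \<exists>c. a' = c *\<^sub>R a"
    using generic_segment_avoids_ridges A(1,2) B(1,2) by metis
  have "ridge_free (z - t)" if z: "z \<in> closed_segment x y" "t \<in> T" "z \<in> (+) t ` P" for z t
  proof -
    have "z \<in> K" using closed_segment_subset[OF _ _ K(3)] xy K(1) z(1) by blast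
    then have "t \<in> S" using z(2,3) by (auto simp: S_def)
    have "\<exists>c. a' = c *\<^sub>R a"
      if ab: "(a, b) \<in> C" "(a', b') \<in> C" "a \<bullet> (z - t) = b" "a' \<bullet> (z - t) = b'" for a b a' b'
    proof -
      have "(a, b + a \<bullet> t) \<in> H" "(a', b' + a' \<bullet> t) \<in> H"
        using \<open>t \<in> S\<close> ab(1,2) by (force simp: H_def)+
      then show ?thesis using generic[OF z(1)] ab(3,4) by (simp add: inner_diff_right)
    qed
    then show ?thesis unfolding ridge_free_def by blast
  qed
  with xy show thesis by (rule that)
qed

lemma Union_period_tiles_eq_UNIV:
  assumes "t0 \<in> T"
  shows "(\<Union>v\<in>periods. (+) (t0 + v) ` P) = UNIV"
proof (rule ccontr)
  define U where "U = (\<Union>v\<in>periods. (+) (t0 + v) ` P)"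
  assume "\<not> ?thesis"
  then obtain y0 where "y0 \<notin> U" unfolding U_def by blast
  have "(+) t0 ` periods \<subseteq> T" using assms by (auto simp: periods_def)
  from closed_Union_tiles[OF this] have "closed U" by (simp add: U_def image_image)
  then obtain \<rho> where \<rho>: "\<rho> > 0" "ball y0 \<rho> \<subseteq> - U"
    using \<open>y0 \<notin> U\<close> open_contains_ball[of "- U"] by (auto simp: closed_def)
  obtain r where r: "r > 0" "ball 0 r \<subseteq> interior P"
    using zero_in_interior_P open_interior open_contains_ball by blast
  have "ball t0 r \<subseteq> U"
  proof
    fix p assume "p \<in> ball t0 r"
    then have "p - t0 \<in> interior P" using r(2) by (auto simp: dist_norm norm_minus_commute)
    then have "p - t0 \<in> P" using interior_subset by blast
    then show "p \<in> U"
      unfolding U_def using zero_in_periods by (intro UN_I[of 0]) (simp_all add: mem_translation_iff)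
  qed
  obtain x y where xy: "x \<in> ball t0 r" "y \<in> ball y0 \<rho>"
    and off_ridges: "\<And>z t. z \<in> closed_segment x y \<Longrightarrow> t \<in> T \<Longrightarrow> z \<in> (+) t ` P \<Longrightarrow> ridge_free (z - t)"
    using exists_segment_off_ridges[of "ball t0 r" "ball y0 \<rho>"] r(1) \<rho>(1) by auto
  have "closed_segment x y \<inter> frontier U \<noteq> {}"
    using xy \<open>ball t0 r \<subseteq> U\<close> \<rho>(2)
    by (intro connected_Int_frontier[OF connected_segment]) auto
  then obtain z where z: "z \<in> closed_segment x y" "z \<in> U" "z \<notin> interior U"
    using \<open>closed U\<close> by (auto simp: frontier_def)
  then obtain v where v: "v \<in> periods" "z - (t0 + v) \<in> P"
    by (auto simp: U_def mem_translation_iff)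
  define t where "t = t0 + v"
  have "t \<in> T" using v(1) assms by (simp add: t_def periods_def)
  have "z - t \<notin> interior P"
  proof
    assume "z - t \<in> interior P"
    then have "z \<in> interior ((+) t ` P)" by (simp add: interior_translation mem_translation_iff)
    moreover have "(+) t ` P \<subseteq> U" using v(1) by (auto simp: U_def t_def)
    ultimately show False using z(3) interior_mono by blast
  qed
  moreover have "ridge_free (z - t)"
    using off_ridges[OF z(1) \<open>t \<in> T\<close>] v(2) by (simp add: t_def mem_translation_iff)
  ultimately obtain a where "facet_point a (z - t)"
    using facet_point_if_ridge_free v(2) by (auto simp: t_def)
  then have "z \<in> interior U"
    using interior_Union_period_tiles_at_facet[OF assms v(1)] by (simp add: U_def t_def)
  then show False using z(3) by blast
qed

lemma translation_diff_in_periods: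
  assumes "t0 \<in> T" "t \<in> T"
  shows "t - t0 \<in> periods"
proof -
  obtain v where v: "v \<in> periods" "t \<in> (+) (t0 + v) ` P"
    using Union_period_tiles_eq_UNIV[OF assms(1)] by blast
  have "t0 + v \<in> T" using v(1) assms(1) by (simp add: periods_def)
  moreover have "t \<in> interior ((+) t ` P)"
    using zero_in_interior_P by (simp add: interior_translation mem_translation_iff)
  ultimately have "t0 + v = t" using tile_eq_if_meets_interior assms(2) v(2) by blast
  then show ?thesis using v(1) by (metis add_diff_cancel_left')
qed

lemma period_tiles_cover: "\<exists>l\<in>periods. x \<in> (+) l ` P"
proof -
  obtain t0 where "t0 \<in> T" using tiles_cover by blast
  then obtain l where "l \<in> periods" "t0 + x \<in> (+) (t0 + l) ` P"
    using Union_period_tiles_eq_UNIV by blast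
  then show ?thesis by (auto simp: mem_translation_iff)
qed

lemma interior_period_tiles_disjoint:
  assumes "l \<in> periods" "l \<noteq> 0"
  shows "interior ((+) l ` P) \<inter> interior P = {}"
proof (rule ccontr)
  assume "\<not> ?thesis"
  then obtain q where q: "q \<in> interior P" "l + q \<in> interior P"
    by (auto simp: interior_translation)
  obtain t0 where "t0 \<in> T" using tiles_cover by blast
  then have "t0 + l \<in> T" using assms(1) by (simp add: periods_def)
  have "t0 + (l + q) \<in> interior ((+) (t0 + l) ` P)" "t0 + (l + q) \<in> interior ((+) t0 ` P)"
    unfolding interior_translation mem_translation_iff using q by (simp_all add: algebra_simps)
  then show False using tiles_interiors_disjoint[OF \<open>t0 + l \<in> T\<close> \<open>t0 \<in> T\<close>] assms(2) by auto
qed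

lemma interior_period_tile_Int_frontier:
  assumes "l \<in> periods"
  shows "interior ((+) l ` P) \<inter> frontier P = {}"
proof (cases "l = 0")
  case True
  then show ?thesis by (simp add: frontier_def)
next
  case False
  then have "interior ((+) l ` P) \<inter> closure (interior P) = {}"
    using interior_period_tiles_disjoint[OF assms] open_Int_closure_eq_empty[OF open_interior] by blast
  then show ?thesis using closure_interior_P frontier_subset_closed[OF closed_P] by blast
qed

lemma finite_period_tiles_meeting_bounded:
  assumes "bounded B"
  shows "finite {l\<in>periods. (+) l ` P \<inter> B \<noteq> {}}"
proof -
  obtain t0 where t0: "t0 \<in> T" using tiles_cover by blast
  have "finite {t\<in>T. (+) t ` P \<inter> (+) t0 ` B \<noteq> {}}"
    using finite_tiles_meeting_bounded assms bounded_translation by blast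
  then have "finite ((\<lambda>t. t - t0) ` {t\<in>T. (+) t ` P \<inter> (+) t0 ` B \<noteq> {}})" by simp
  moreover have "{l\<in>periods. (+) l ` P \<inter> B \<noteq> {}} \<subseteq> (\<lambda>t. t - t0) ` {t\<in>T. (+) t ` P \<inter> (+) t0 ` B \<noteq> {}}"
  proof
    fix l assume "l \<in> {l\<in>periods. (+) l ` P \<inter> B \<noteq> {}}"
    then obtain q where "l \<in> periods" "q \<in> P" "l + q \<in> B" by auto
    then have "t0 + l \<in> {t\<in>T. (+) t ` P \<inter> (+) t0 ` B \<noteq> {}}"
      using t0 by (auto simp: periods_def image_iff intro!: exI[of _ "t0 + (l + q)"])
    then show "l \<in> (\<lambda>t. t - t0) ` {t\<in>T. (+) t ` P \<inter> (+) t0 ` B \<noteq> {}}" by force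
  qed
  ultimately show ?thesis using finite_subset by blast
qed

section \<open>At most 2^n residues modulo twice the period lattice\<close>

lemma measure_le_sum_period_tile_pieces:
  assumes "B \<in> lmeasurable" "bounded B"
  shows "measure lebesgue B \<le> (\<Sum>l\<in>{l\<in>periods. (+) l ` P \<inter> B \<noteq> {}}. measure lebesgue (B \<inter> (+) l ` P))"
proof -
  define G where "G = {l\<in>periods. (+) l ` P \<inter> B \<noteq> {}}"
  have "finite G" unfolding G_def using finite_period_tiles_meeting_bounded[OF assms(2)] .
  have pieces: "B \<inter> (+) l ` P \<in> lmeasurable" for l
    using assms(1) measurable_translation[OF lmeasurable_compact[OF compact_P]]
    by (rule fmeasurable_Int_fmeasurable[OF _ fmeasurableD])
  have "B \<subseteq> (\<Union>l\<in>G. B \<inter> (+) l ` P)"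
    using period_tiles_cover by (fastforce simp: G_def)
  moreover have "(\<Union>l\<in>G. B \<inter> (+) l ` P) \<in> lmeasurable"
    using \<open>finite G\<close> pieces by (rule fmeasurable.finite_UN)
  ultimately have "measure lebesgue B \<le> measure lebesgue (\<Union>l\<in>G. B \<inter> (+) l ` P)"
    using measure_mono_fmeasurable fmeasurableD[OF assms(1)] by blast
  also have "\<dots> \<le> (\<Sum>l\<in>G. measure lebesgue (B \<inter> (+) l ` P))"
    using \<open>finite G\<close> pieces by (intro measure_UNION_le) (auto intro: fmeasurableD)
  finally show ?thesis by (simp add: G_def)
qed

definition half_tile :: "'a \<Rightarrow> 'a set" where
  "half_tile u = (\<lambda>q. (1/2) *\<^sub>R (u + q)) ` interior P"

lemma half_tile_eq_affine_image: "half_tile u = (+) ((1/2) *\<^sub>R u) ` ((*\<^sub>R) (1/2) ` interior P)"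
  by (auto simp: half_tile_def image_iff scaleR_add_right)

lemma half_tile_lmeasurable: "half_tile u \<in> lmeasurable"
  and bounded_half_tile: "bounded (half_tile u)"
  unfolding half_tile_eq_affine_image using bounded_P
  by (auto intro!: lmeasurable_open bounded_translation bounded_scaling open_translation open_scaling)

lemma measure_half_tile: "measure lebesgue (half_tile u) = (1/2) ^ DIM('a) * measure lebesgue (interior P)"
  using measure_lebesgue_affine[of "1/2" 0 "interior P"]
  by (simp add: half_tile_eq_affine_image measure_translation)

definition reduced_piece :: "'a \<Rightarrow> 'a \<Rightarrow> 'a set" where
  "reduced_piece u l = (\<lambda>x. x - l) ` (half_tile u \<inter> (+) l ` P)"

lemma reduced_piece_lmeasurable: "reduced_piece u l \<in> lmeasurable"
  unfolding reduced_piece_def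
  using half_tile_lmeasurable measurable_translation[OF lmeasurable_compact[OF compact_P]]
  by (intro measurable_translation_subtract fmeasurable_Int_fmeasurable[OF _ fmeasurableD])

lemma reduced_pieces_meet_imp_congruent:
  assumes "u \<in> periods" "u' \<in> periods" "l \<in> periods" "l' \<in> periods"
    and "reduced_piece u l \<inter> reduced_piece u' l' \<noteq> {}"
  shows "u - u' = 2 *\<^sub>R (l - l')"
proof (rule ccontr)
  obtain q q' where q: "q \<in> interior P" "q' \<in> interior P"
    and eq: "(1/2) *\<^sub>R (u + q) - l = (1/2) *\<^sub>R (u' + q') - l'"
    using assms(5) by (auto simp: reduced_piece_def half_tile_def)
  define \<delta> where "\<delta> = (u - 2 *\<^sub>R l) - (u' - 2 *\<^sub>R l')"
  assume "u - u' \<noteq> 2 *\<^sub>R (l - l')"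
  then have "\<delta> \<noteq> 0" by (simp add: \<delta>_def algebra_simps)
  moreover have "\<delta> \<in> periods"
    unfolding \<delta>_def using assms(1-4) by (intro periods_diff) (simp_all add: scaleR_2 periods_add)
  moreover have "q' = \<delta> + q"
  proof -
    have "2 *\<^sub>R ((1/2) *\<^sub>R (u + q) - l) = 2 *\<^sub>R ((1/2) *\<^sub>R (u' + q') - l')" using eq by simp
    then show ?thesis by (simp add: \<delta>_def algebra_simps)
  qed
  ultimately show False
    using interior_period_tiles_disjoint q by (auto simp: interior_translation)
qed

lemma card_pairwise_incongruent_periods_le:
  assumes "finite R" "R \<subseteq> periods"
    and incongruent: "\<And>u u'. u \<in> R \<Longrightarrow> u' \<in> R \<Longrightarrow> u \<noteq> u' \<Longrightarrow> \<not> (\<exists>l\<in>periods. u - u' = 2 *\<^sub>R l)"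
  shows "card R \<le> 2 ^ DIM('a)"
proof -
  have "\<not> negligible (interior P)" using open_not_negligible interior_P_nonempty by blast
  then have "measure lebesgue (interior P) > 0"
    using negligible_iff_measure0[OF lmeasurable_interior[OF bounded_P]]
      measure_nonneg[of lebesgue "interior P"] by linarith
  define G where "G u = {l\<in>periods. (+) l ` P \<inter> half_tile u \<noteq> {}}" for u
  define J where "J = Sigma R G"
  have "finite J" unfolding J_def G_def
    using assms(1) finite_period_tiles_meeting_bounded[OF bounded_half_tile] by simp
  \<comment> \<open>the half tiles, cut by the period tiles and translated back into P, are disjoint pieces of P\<close>
  have "pairwise (\<lambda>i j. case_prod reduced_piece i \<inter> case_prod reduced_piece j = {}) J"
  proof (rule pairwiseI)
    fix i j assume "i \<in> J" "j \<in> J" "i \<noteq> j"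
    obtain u l u' l' where ij: "i = (u, l)" "j = (u', l')" by fastforce
    have mem: "u \<in> R" "u' \<in> R" "l \<in> periods" "l' \<in> periods"
      using \<open>i \<in> J\<close> \<open>j \<in> J\<close> by (auto simp: J_def G_def ij)
    show "case_prod reduced_piece i \<inter> case_prod reduced_piece j = {}"
    proof (rule ccontr)
      assume "case_prod reduced_piece i \<inter> case_prod reduced_piece j \<noteq> {}"
      with reduced_pieces_meet_imp_congruent[of u u' l l'] mem assms(2)
      have "u - u' = 2 *\<^sub>R (l - l')" by (auto simp: ij)
      then have "u = u'" using incongruent mem by (meson periods_diff)
      with \<open>u - u' = 2 *\<^sub>R (l - l')\<close> \<open>i \<noteq> j\<close> show False by (simp add: ij)
    qed
  qed
  then have "(\<Sum>(u, l)\<in>J. measure lebesgue (reduced_piece u l)) =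
      measure lebesgue (\<Union>(u, l)\<in>J. reduced_piece u l)"
    using \<open>finite J\<close> reduced_piece_lmeasurable
    by (subst measure_negligible_finite_Union_image) (auto simp: pairwise_def case_prod_unfold)
  also have "\<dots> \<le> measure lebesgue P"
    using \<open>finite J\<close> reduced_piece_lmeasurable lmeasurable_compact[OF compact_P]
    by (intro measure_mono_fmeasurable)
      (auto simp: reduced_piece_def mem_translation_iff fmeasurableD intro!: fmeasurable.finite_UN)
  also have "\<dots> = measure lebesgue (interior P)"
    using measure_interior[OF bounded_P negligible_convex_frontier[OF convex_P]] by simp
  finally have sum_pieces: "(\<Sum>(u, l)\<in>J. measure lebesgue (reduced_piece u l)) \<le> measure lebesgue (interior P)" .
  have "real (card R) * ((1/2) ^ DIM('a) * measure lebesgue (interior P)) =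
      (\<Sum>u\<in>R. measure lebesgue (half_tile u))"
    by (simp add: measure_half_tile)
  also have "\<dots> \<le> (\<Sum>u\<in>R. \<Sum>l\<in>G u. measure lebesgue (reduced_piece u l))"
    using measure_le_sum_period_tile_pieces[OF half_tile_lmeasurable bounded_half_tile]
    by (intro sum_mono) (simp add: G_def reduced_piece_def measure_translation_subtract)
  also have "\<dots> = (\<Sum>(u, l)\<in>J. measure lebesgue (reduced_piece u l))"
    unfolding J_def using assms(1) finite_period_tiles_meeting_bounded[OF bounded_half_tile]
    by (subst sum.Sigma) (auto simp: G_def)
  finally have "(real (card R) * (1/2) ^ DIM('a)) * measure lebesgue (interior P) \<le>
      1 * measure lebesgue (interior P)"
    using sum_pieces by (simp add: mult.assoc)
  then have "real (card R) * (1/2) ^ DIM('a) \<le> 1"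
    using \<open>measure lebesgue (interior P) > 0\<close> by (rule mult_right_le_imp_le)
  then show ?thesis by (simp add: power_one_over field_simps flip: of_nat_le_iff)
qed

definition mod_two_periods :: "('a \<times> 'a) set" where
  "mod_two_periods = {(u, v). u \<in> periods \<and> v \<in> periods \<and> (\<exists>l\<in>periods. u - v = 2 *\<^sub>R l)}"

lemma equiv_mod_two_periods: "equiv periods mod_two_periods"
proof (rule equivI)
  show "refl_on periods mod_two_periods"
    using zero_in_periods by (auto simp: refl_on_def mod_two_periods_def)
  show "sym mod_two_periods"
  proof (rule symI)
    fix u v assume "(u, v) \<in> mod_two_periods"
    then obtain l where "u \<in> periods" "v \<in> periods" "l \<in> periods" "u - v = 2 *\<^sub>R l"
      by (auto simp: mod_two_periods_def)
    moreover from \<open>u - v = 2 *\<^sub>R l\<close> have "v - u = 2 *\<^sub>R (- l)"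
      by (metis minus_diff_eq scaleR_minus_right)
    ultimately show "(v, u) \<in> mod_two_periods"
      using periods_uminus unfolding mod_two_periods_def by blast
  qed
  show "trans mod_two_periods"
  proof (rule transI)
    fix u v w assume "(u, v) \<in> mod_two_periods" "(v, w) \<in> mod_two_periods"
    then obtain l l' where "u \<in> periods" "w \<in> periods" "l \<in> periods" "l' \<in> periods"
      "u - v = 2 *\<^sub>R l" "v - w = 2 *\<^sub>R l'"
      by (auto simp: mod_two_periods_def)
    then show "(u, w) \<in> mod_two_periods"
      using periods_add by (auto simp: mod_two_periods_def algebra_simps intro!: bexI[of _ "l + l'"])
  qed
qed (auto simp: mod_two_periods_def)

lemma finite_card_quotient_mod_two_periods:
  "finite (periods // mod_two_periods) \<and> card (periods // mod_two_periods) \<le> 2 ^ DIM('a)"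
proof (rule finite_if_finite_subsets_card_bdd)
  fix G assume G: "G \<subseteq> periods // mod_two_periods" "finite G"
  then obtain rep where rep: "\<And>X. X \<in> G \<Longrightarrow> rep X \<in> X"
    using in_quotient_imp_non_empty[OF equiv_mod_two_periods] by (metis all_not_in_conv subsetD)
  have rep_related: "X = Y \<longleftrightarrow> (rep X, rep Y) \<in> mod_two_periods" if "X \<in> G" "Y \<in> G" for X Y
    using quotient_eq_iff[OF equiv_mod_two_periods] G(1) rep that by blast
  have "inj_on rep G"
    using rep_related equiv_mod_two_periods G(1) rep by (intro inj_onI) (metis equiv_class_eq_iff)
  moreover have "rep ` G \<subseteq> periods"
    using G(1) rep in_quotient_imp_subset[OF equiv_mod_two_periods] by blast
  moreover have "\<not> (\<exists>l\<in>periods. u - u' = 2 *\<^sub>R l)" if "u \<in> rep ` G" "u' \<in> rep ` G" "u \<noteq> u'" for u u'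
    using that rep_related \<open>rep ` G \<subseteq> periods\<close> by (auto simp: mod_two_periods_def)
  ultimately show "card G \<le> 2 ^ DIM('a)"
    using card_pairwise_incongruent_periods_le[of "rep ` G"] G(2) by (simp add: card_image)
qed

lemma exists_transversal_direction: "\<exists>d. \<forall>(a, b)\<in>C. a \<bullet> d \<noteq> 0"
proof -
  have "negligible (\<Union>(a, b)\<in>C. {d. a \<bullet> d = 0})"
    using finite_C C_nonzero by (auto intro!: negligible_Union negligible_hyperplane)
  then obtain d where "d \<notin> (\<Union>(a, b)\<in>C. {d. a \<bullet> d = 0})"
    using exists_notin_negligible[OF open_UNIV UNIV_not_empty] by blast
  then show ?thesis by auto
qed

lemma exists_tile_ahead:
  assumes d: "\<forall>(a, b)\<in>C. a \<bullet> d \<noteq> 0"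
  shows "\<exists>t\<in>T. \<forall>\<^sub>F \<epsilon> in at_right 0. X + \<epsilon> *\<^sub>R d \<in> interior ((+) t ` P)"
proof -
  define S where "S = {t\<in>T. (+) t ` P \<inter> cball X (norm d) \<noteq> {}}"
  have "finite (S \<times> C)" unfolding S_def by (simp add: finite_C finite_tiles_meeting_bounded)
  \<comment> \<open>the parameter at which the ray X + \<epsilon> d crosses the facet hyperplane (a, b) of the tile at t\<close>
  define crossing where "crossing = (\<lambda>(t, (a, b)). (b - a \<bullet> (X - t)) / (a \<bullet> d))"
  have "\<forall>\<^sub>F e in at_right 0. \<forall>i\<in>S \<times> C. crossing i > 0 \<longrightarrow> e < crossing i"
    using \<open>finite (S \<times> C)\<close>
    by (intro eventually_ball_finite) (auto simp: eventually_at_right_field intro: exI[of _ "crossing _"])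
  moreover have "\<forall>\<^sub>F e in at_right 0. 0 < e \<and> e \<le> (1::real)"
    unfolding eventually_at_right_field by (intro exI[of _ 1]) auto
  ultimately have "\<forall>\<^sub>F e in at_right 0. (\<forall>i\<in>S \<times> C. crossing i > 0 \<longrightarrow> e < crossing i) \<and> (0 < e \<and> e \<le> 1)"
    by (rule eventually_conj)
  then obtain e where e: "0 < e" "e \<le> 1" "\<And>i. i \<in> S \<times> C \<Longrightarrow> crossing i > 0 \<Longrightarrow> e < crossing i"
    using eventually_happens'[OF trivial_limit_at_right_real] by blast
  obtain t where t: "t \<in> T" "X + e *\<^sub>R d \<in> (+) t ` P" using tiles_cover by blast
  have "dist X (X + e *\<^sub>R d) \<le> norm d" using e by (simp add: dist_norm mult_left_le_one_le)
  then have "t \<in> S" using t by (auto simp: S_def)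
  have "X + \<epsilon> *\<^sub>R d - t \<in> interior P" if "0 < \<epsilon>" "\<epsilon> < e" for \<epsilon>
  proof (rule strict_inequalities_imp_interior, clarify)
    fix a b assume ab: "(a, b) \<in> C"
    have "a \<bullet> d \<noteq> 0" using d ab by blast
    have affine: "a \<bullet> (X + s *\<^sub>R d - t) - b = (s - crossing (t, (a, b))) * (a \<bullet> d)" for s
      using \<open>a \<bullet> d \<noteq> 0\<close> by (simp add: crossing_def inner_add_right inner_diff_right field_simps)
    have "a \<bullet> (X + e *\<^sub>R d - t) \<le> b"
      using t(2) ab P_eq_halfspaces by (auto simp: mem_translation_iff)
    then have "(e - crossing (t, (a, b))) * (a \<bullet> d) \<le> 0" using affine[of e] by linarith
    moreover have "crossing (t, (a, b)) > 0 \<Longrightarrow> e < crossing (t, (a, b))"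
      using e(3) \<open>t \<in> S\<close> ab by blast
    ultimately have "(\<epsilon> - crossing (t, (a, b))) * (a \<bullet> d) < 0"
      using that \<open>a \<bullet> d \<noteq> 0\<close> by (smt (verit) mult_le_0_iff zero_le_mult_iff)
    then show "a \<bullet> (X + \<epsilon> *\<^sub>R d - t) < b" using affine[of \<epsilon>] by linarith
  qed
  then have "\<forall>\<^sub>F \<epsilon> in at_right 0. X + \<epsilon> *\<^sub>R d \<in> interior ((+) t ` P)"
    unfolding eventually_at_right_field using e(1)
    by (intro exI[of _ e]) (simp add: interior_translation mem_translation_iff)
  then show ?thesis using t(1) by blast
qed

lemma half_difference_notin_frontier:
  assumes "l \<in> periods" "t - s = 2 *\<^sub>R l"
    and "\<forall>\<^sub>F \<epsilon> in at_right 0. X + \<epsilon> *\<^sub>R d \<in> interior ((+) t ` P)"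
    and "\<forall>\<^sub>F \<epsilon> in at_right 0. Y + \<epsilon> *\<^sub>R d \<in> interior ((+) s ` P)"
  shows "(1/2) *\<^sub>R (X - Y) \<notin> frontier P"
proof -
  have "\<forall>\<^sub>F \<epsilon> in at_right 0. X + \<epsilon> *\<^sub>R d \<in> interior ((+) t ` P) \<and> Y + \<epsilon> *\<^sub>R d \<in> interior ((+) s ` P)"
    using assms(3,4) by (rule eventually_conj)
  then obtain \<epsilon> where "X + \<epsilon> *\<^sub>R d - t \<in> interior P" "Y + \<epsilon> *\<^sub>R d - s \<in> interior P"
    using eventually_happens'[OF trivial_limit_at_right_real]
    by (auto simp: interior_translation mem_translation_iff)
  then have "(1/2) *\<^sub>R (X + \<epsilon> *\<^sub>R d - t) + (1/2) *\<^sub>R (- (Y + \<epsilon> *\<^sub>R d - s)) \<in> interior P"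
    by (intro convexD[OF convex_interior[OF convex_P]] neg_mem_interior_P) simp_all
  also have "(1/2) *\<^sub>R (X + \<epsilon> *\<^sub>R d - t) + (1/2) *\<^sub>R (- (Y + \<epsilon> *\<^sub>R d - s)) =
      (1/2) *\<^sub>R ((X - Y) - (t - s))"
    by (simp add: algebra_simps)
  also have "\<dots> = (1/2) *\<^sub>R (X - Y) - l" using assms(2) by (simp add: algebra_simps)
  finally have "(1/2) *\<^sub>R (X - Y) \<in> interior ((+) l ` P)"
    by (simp add: interior_translation mem_translation_iff)
  then show ?thesis using interior_period_tile_Int_frontier[OF assms(1)] by blast
qed

lemma frontier_avoiding_colouring:
  "\<exists>c::'a \<Rightarrow> nat. (\<forall>x. c x < 2 ^ DIM('a)) \<and> (\<forall>x y. x - y \<in> frontier P \<longrightarrow> c x \<noteq> c y)"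
proof -
  obtain d where d: "\<forall>(a, b)\<in>C. a \<bullet> d \<noteq> 0" using exists_transversal_direction by blast
  obtain t0 where "t0 \<in> T" using tiles_cover by blast
  \<comment> \<open>the tile entered by a ray in direction d makes the choice of tile half-open\<close>
  have "\<forall>X. \<exists>t. t \<in> T \<and> (\<forall>\<^sub>F \<epsilon> in at_right 0. X + \<epsilon> *\<^sub>R d \<in> interior ((+) t ` P))"
    using exists_tile_ahead[OF d] by blast
  then obtain tile where tile: "\<And>X. tile X \<in> T"
    "\<And>X. \<forall>\<^sub>F \<epsilon> in at_right 0. X + \<epsilon> *\<^sub>R d \<in> interior ((+) (tile X) ` P)"
    by metis
  define residue where "residue x = mod_two_periods `` {tile (2 *\<^sub>R x) - t0}" for x
  have residue: "residue x \<in> periods // mod_two_periods" for x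
    unfolding residue_def using translation_diff_in_periods[OF \<open>t0 \<in> T\<close> tile(1)] by (rule quotientI)
  obtain g :: "'a set \<Rightarrow> nat"
    where g: "g ` (periods // mod_two_periods) \<subseteq> {..<2 ^ DIM('a)}" "inj_on g (periods // mod_two_periods)"
    using card_le_inj[of "periods // mod_two_periods" "{..<(2::nat) ^ DIM('a)}"]
      finite_card_quotient_mod_two_periods by auto
  have "residue x \<noteq> residue y" if "x - y \<in> frontier P" for x y
  proof
    assume "residue x = residue y"
    then have "(tile (2 *\<^sub>R x) - t0, tile (2 *\<^sub>R y) - t0) \<in> mod_two_periods"
      using eq_equiv_class_iff[OF equiv_mod_two_periods] translation_diff_in_periods[OF \<open>t0 \<in> T\<close> tile(1)]
      by (simp add: residue_def)
    then obtain l where l: "l \<in> periods" "tile (2 *\<^sub>R x) - tile (2 *\<^sub>R y) = 2 *\<^sub>R l"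
      by (auto simp: mod_two_periods_def)
    from half_difference_notin_frontier[OF l tile(2) tile(2)] that show False
      by (simp add: scaleR_diff_right)
  qed
  then have "\<forall>x y. x - y \<in> frontier P \<longrightarrow> g (residue x) \<noteq> g (residue y)"
    using inj_on_eq_iff[OF g(2) residue residue] by blast
  moreover have "\<forall>x. g (residue x) < 2 ^ DIM('a)" using g(1) residue by blast
  ultimately show ?thesis by (intro exI[of _ "\<lambda>x. g (residue x)"]) blast
qed

end

section \<open>The unit sphere of the gauge\<close>

lemma mem_scaled_iff:
  fixes z :: "'a::real_vector"
  assumes "l > 0"
  shows "z \<in> (\<lambda>y. l *\<^sub>R y) ` P \<longleftrightarrow> (1 / l) *\<^sub>R z \<in> P"
  using assms by (auto simp: image_iff intro!: bexI[of _ "(1 / l) *\<^sub>R z"])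

lemma gauge_norm_lt_1_if_interior:
  fixes P :: "(real ^ 'n) set"
  assumes "z \<in> interior P"
  shows "gauge_norm P z < 1"
proof -
  obtain e where e: "e > 0" "ball z e \<subseteq> P"
    using assms open_interior open_contains_ball interior_subset by (metis order_trans)
  have n: "norm z + 1 > 0" using norm_ge_zero[of z] by linarith
  define l where "l = 1 + e / (2 * (norm z + 1))"
  have l: "l > 1" using e n by (simp add: l_def)
  have "dist z (l *\<^sub>R z) = norm ((l - 1) *\<^sub>R z)"
    by (simp add: dist_norm algebra_simps norm_minus_commute)
  also have "\<dots> = (l - 1) * norm z" using l by simp
  also have "\<dots> \<le> (l - 1) * (norm z + 1)" using l by (intro mult_left_mono) auto
  also have "\<dots> = e / 2" using n by (simp add: l_def field_simps)
  also have "\<dots> < e" using e by simp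
  finally have "z \<in> (\<lambda>y. (1 / l) *\<^sub>R y) ` P" using e(2) l by (simp add: mem_scaled_iff subset_iff)
  then have "gauge_norm P z \<le> 1 / l"
    unfolding gauge_norm_def using l by (intro cInf_lower bdd_belowI[of _ 0]) auto
  moreover have "1 / l < 1" using l by simp
  ultimately show ?thesis by linarith
qed

lemma mem_if_gauge_norm_le_1:
  fixes P :: "(real ^ 'n) set"
  assumes convex: "convex P" and closed: "closed P" and "0 \<in> interior P"
    and "gauge_norm P z \<le> 1"
  shows "z \<in> P"
proof (rule ccontr)
  assume "z \<notin> P"
  define S where "S = {l. l \<ge> 0 \<and> z \<in> (\<lambda>y. l *\<^sub>R y) ` P}"
  have "0 \<in> P" using assms(3) interior_subset by blast
  obtain r where r: "r > 0" "ball 0 r \<subseteq> P"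
    using assms(3) open_interior open_contains_ball interior_subset by (metis order_trans)
  have "S \<noteq> {}"
  proof -
    define l where "l = 2 * norm z / r + 1"
    have "l * r = 2 * norm z + r" using r by (simp add: l_def field_simps)
    then have l: "l > 0" "norm z < l * r"
      using r norm_ge_zero[of z] by (auto simp: l_def add_nonneg_pos)
    then have "(1 / l) *\<^sub>R z \<in> ball 0 r" by (simp add: divide_less_eq mult.commute)
    then have "z \<in> (\<lambda>y. l *\<^sub>R y) ` P" using mem_scaled_iff[OF l(1)] r(2) by blast
    then have "l \<in> S" using l(1) by (simp add: S_def)
    then show ?thesis by blast
  qed
  \<comment> \<open>by convexity and 0 \<in> P the scaling factors in S form an up-set\<close>
  have scaled_down: "(1 / l) *\<^sub>R z \<in> P" if "l > 1" for l
  proof -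
    obtain l0 where "l0 \<in> S" "l0 < l"
      using cInf_less_iff[OF \<open>S \<noteq> {}\<close>, of l] assms(4) \<open>l > 1\<close> bdd_belowI[of S 0]
      by (force simp: S_def gauge_norm_def)
    then have "l0 > 0" using \<open>z \<notin> P\<close> \<open>0 \<in> P\<close> by (auto simp: S_def less_le)
    then have "(1 / l0) *\<^sub>R z \<in> P" using \<open>l0 \<in> S\<close> by (simp add: S_def mem_scaled_iff)
    from convexD[OF convex \<open>0 \<in> P\<close> this, of "1 - l0 / l" "l0 / l"]
    show ?thesis using \<open>l0 > 0\<close> \<open>l0 < l\<close> by simp
  qed
  obtain e where e: "e > 0" "ball z e \<inter> P = {}"
    using \<open>z \<notin> P\<close> closed open_contains_ball[of "- P"] by (force simp: closed_def)
  have n: "norm z + 1 > 0" using norm_ge_zero[of z] by linarith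
  define l where "l = 1 + e / (2 * (norm z + 1))"
  have l: "l > 1" using e n by (simp add: l_def)
  have "dist z ((1 / l) *\<^sub>R z) = norm ((1 - 1 / l) *\<^sub>R z)"
    by (simp add: dist_norm algebra_simps)
  also have "\<dots> = (l - 1) / l * norm z" using l by (simp add: field_simps)
  also have "\<dots> \<le> (l - 1) * (norm z + 1)"
    using l by (intro mult_mono) (simp_all add: divide_le_eq mult_le_cancel_left1)
  also have "\<dots> = e / 2" using n by (simp add: l_def field_simps)
  also have "\<dots> < e" using e by simp
  finally show False using e scaled_down[OF l] by (auto simp: dist_commute)
qed

lemma gauge_norm_eq_1_imp_frontier:
  fixes P :: "(real ^ 'n) set"
  assumes "convex P" "closed P" "0 \<in> interior P" "gauge_norm P z = 1"
  shows "z \<in> frontier P"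
proof -
  have "z \<in> P" using mem_if_gauge_norm_le_1[OF assms(1-3)] assms(4) by simp
  moreover have "z \<notin> interior P" using gauge_norm_lt_1_if_interior assms(4) by fastforce
  ultimately show ?thesis using assms(2) by (simp add: frontier_def)
qed

theorem proposition3:
  fixes P :: "(real ^ 'n) set"
  assumes "parallelohedron P"
    and "\<forall>x\<in>P. - x \<in> P"
  shows "unit_dist_chromatic_number (gauge_norm P) \<le> enat (2 ^ CARD('n))"
proof -
  obtain T where P: "polytope P" "interior P \<noteq> {}"
    and cover: "(\<Union>t\<in>T. (+) t ` P) = UNIV"
    and tiling: "\<forall>t\<in>T. \<forall>s\<in>T. t \<noteq> s \<longrightarrow>
      interior ((+) t ` P) \<inter> interior ((+) s ` P) = {} \<and> ((+) t ` P \<inter> (+) s ` P) face_of (+) t ` P"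
    using assms(1) unfolding parallelohedron_def by blast
  obtain C where C: "finite C" "\<And>a b. (a, b) \<in> C \<Longrightarrow> a \<noteq> 0" "P = {y. \<forall>(a, b)\<in>C. a \<bullet> y \<le> b}"
    using polyhedron_halfspace_pairs[OF polytope_imp_polyhedron[OF P(1)]] by blast
  interpret face_to_face_tiling P T C
  proof
    show "convex P" "compact P" using P(1) polytope_imp_convex polytope_imp_compact by blast+
  qed (use P(2) C assms(2) cover tiling in blast)+
  obtain c :: "real ^ 'n \<Rightarrow> nat"
    where c: "\<And>x. c x < 2 ^ CARD('n)" "\<And>x y. x - y \<in> frontier P \<Longrightarrow> c x \<noteq> c y"
    using frontier_avoiding_colouring by auto
  have "c x \<noteq> c y" if "gauge_norm P (x - y) = 1" for x y
    using c(2) gauge_norm_eq_1_imp_frontier[OF convex_P closed_P zero_in_interior_P that] by blast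
  then show ?thesis
    unfolding unit_dist_chromatic_number_def using c(1) by (intro Inf_lower) blast
qed

end
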